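(* Let $\mathsf{K}$ be an idempotent commutative semiring. Every rational series $\mathsf{S}\in\mathsf{K}[[X]]$ can be written as $$\mathsf{S}=\bigoplus_{1\leq i\leq r}\mathsf{P}_i\,(\mathsf{q}_iX^c)^*,$$ where $r\ge 0$, $\mathsf{P}_1,\dots,\mathsf{P}_r\in\mathsf{K}[X]$ are polynomials, $\mathsf{q}_1,\dots,\mathsf{q}_r\in\mathsf{K}$, and $c$ is a positive integer.
   Context: $\mathsf{K}[[X]]$ is the semiring of formal power series over $\mathsf{K}$ with coefficientwise sum $\oplus$ and Cauchy product; for a series $U$ with zero constant coefficient, $U^*=\bigoplus_{k\ge0}U^k$. A series is rational if it belongs to the smallest subset of $\mathsf{K}[[X]]$ containing $\mathsf{K}[X]$ and closed under sum, product and star (of series with zero constant coefficient). Idempotent: $u\oplus u=u$; commutative: $uv=vu$. *)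

theory Defs
  imports "HOL-Computational_Algebra.Polynomial_FPS"
begin

text \<open>Star of a formal power series: U^* = sum over k of U^k. For U with zero
constant coefficient, U^k has no coefficients below degree k, so the n-th
coefficient of the infinite sum is the finite sum over k = 0..n.\<close>
definition fps_star :: "'a::comm_semiring_1 fps \<Rightarrow> 'a fps" where
  "fps_star U = Abs_fps (\<lambda>n. \<Sum>k\<le>n. fps_nth (U ^ k) n)"

inductive_set rational_fps :: "'a::comm_semiring_1 fps set" where
  poly: "fps_of_poly p \<in> rational_fps"
| add: "S \<in> rational_fps \<Longrightarrow> T \<in> rational_fps \<Longrightarrow> S + T \<in> rational_fps"
| mult: "S \<in> rational_fps \<Longrightarrow> T \<in> rational_fps \<Longrightarrow> S * T \<in> rational_fps"
| star: "U \<in> rational_fps \<Longrightarrow> fps_nth U 0 = 0 \<Longrightarrow> fps_star U \<in> rational_fps"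

end

theory Submission
  imports Defs
begin

(* Call a "geometric term of period c" a series  p * star(q X^c)  with p a polynomial
   and q a scalar.  We show that the series which are finite sums of geometric
   terms of one common period c > 0 contain the polynomials and are closed under
   sum, product and star; by induction over rational_fps every rational series
   is such a sum, which is the theorem.

   1. General facts on the star (any commutative semiring): star U is the unique
      solution of V = 1 + U V, and star Z = (1 + Z + ... + Z^(d-1)) star(Z^d).  The
      latter shows that a term of period c is also a term of period c d, so two
      normal forms can always be brought to a common period (closure under sum).
   2. Facts needing idempotency: star(U + V) = star U * star V, hence products of terms
      of the same period are terms again, and star(P * star W) = 1 + P * star P * star W, which
      together with the star of a polynomial (a product of stars of monomials)
      gives closure under star. *)

unbundle fps_syntax

section \<open>The star of a power series\<close>

lemma star_nth: "fps_star U $ n = (\<Sum>k\<le>n. (U ^ k) $ n)"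
  by (simp add: fps_star_def)

lemma star_nth_0 [simp]: "fps_star U $ 0 = 1"
  by (simp add: star_nth)

lemma power_nth_eq_0:
  fixes U :: "'a::comm_semiring_1 fps"
  assumes U0: "U $ 0 = 0"
  shows "n < k \<Longrightarrow> (U ^ k) $ n = 0"
proof (induction k arbitrary: n)
  case 0 then show ?case by simp
next
  case (Suc k)
  have "U $ i * (U ^ k) $ (n - i) = 0" if "i \<le> n" for i
    using U0 Suc that by (cases "i = 0") auto
  then show ?case by (simp add: fps_mult_nth)
qed

lemma star_nth_partial_sum:
  fixes U :: "'a::comm_semiring_1 fps"
  assumes U0: "U $ 0 = 0" and "n < N"
  shows "fps_star U $ n = (\<Sum>k<N. U ^ k) $ n"
proof -
  have "(\<Sum>k<N. U ^ k) $ n = (\<Sum>k<N. (U ^ k) $ n)" by (simp add: fps_sum_nth)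
  also have "\<dots> = (\<Sum>k\<le>n. (U ^ k) $ n)"
    by (rule sum.mono_neutral_right) (use assms power_nth_eq_0[OF U0] in auto)
  finally show ?thesis by (simp add: star_nth)
qed

lemma fps_mult_nth_cong_le:
  fixes C A B :: "'a::comm_semiring_1 fps"
  assumes "\<And>m. m \<le> n \<Longrightarrow> A $ m = B $ m"
  shows "(C * A) $ n = (C * B) $ n"
  unfolding fps_mult_nth using assms by (intro sum.cong) auto

lemma fps_mult_nth_cong_less:
  fixes C A B :: "'a::comm_semiring_1 fps"
  assumes "C $ 0 = 0" and "\<And>m. m < n \<Longrightarrow> A $ m = B $ m"
  shows "(C * A) $ n = (C * B) $ n"
proof -
  have "C $ i * A $ (n - i) = C $ i * B $ (n - i)" if "i \<le> n" for i
    using assms that by (cases "i = 0") auto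
  then show ?thesis by (simp add: fps_mult_nth)
qed

lemma star_unfold:
  fixes U :: "'a::comm_semiring_1 fps"
  assumes U0: "U $ 0 = 0"
  shows "fps_star U = 1 + U * fps_star U"
proof (rule fps_ext)
  fix n
  have "fps_star U $ n = (\<Sum>k<Suc (Suc n). U ^ k) $ n"
    by (rule star_nth_partial_sum[OF U0]) simp
  also have "(\<Sum>k<Suc (Suc n). U ^ k) = 1 + U * (\<Sum>k<Suc n. U ^ k)"
    by (simp only: sum.lessThan_Suc_shift[of _ "Suc n"] sum_distrib_left power_Suc power_0)
  also have "(U * (\<Sum>k<Suc n. U ^ k)) $ n = (U * fps_star U) $ n"
    by (rule fps_mult_nth_cong_le, rule star_nth_partial_sum[OF U0, symmetric]) simp
  then have "(1 + U * (\<Sum>k<Suc n. U ^ k)) $ n = (1 + U * fps_star U) $ n"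
    by simp
  finally show "fps_star U $ n = (1 + U * fps_star U) $ n" .
qed

text \<open>... and the only one; this is how all star identities below are proved.\<close>
lemma star_unique:
  fixes U V :: "'a::comm_semiring_1 fps"
  assumes U0: "U $ 0 = 0" and V: "V = 1 + U * V"
  shows "V = fps_star U"
proof -
  have "V $ n = fps_star U $ n" for n
  proof (induction n rule: less_induct)
    case (less n)
    have "V $ n = (1 + U * V) $ n" using V by simp
    also have "\<dots> = (1 + U * fps_star U) $ n"
      using fps_mult_nth_cong_less[OF U0, of n V "fps_star U"] less by simp
    also have "\<dots> = fps_star U $ n" using star_unfold[OF U0] by simp
    finally show ?case .
  qed
  then show ?thesis by (simp add: fps_ext)
qed

lemma star_zero [simp]: "fps_star (0::'a::comm_semiring_1 fps) = 1"
  by (rule star_unique[symmetric]) simp_all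

lemma star_split_period:
  fixes Z :: "'a::comm_semiring_1 fps"
  assumes Z0: "Z $ 0 = 0" and d: "0 < d"
  shows "fps_star Z = (\<Sum>j<d. Z ^ j) * fps_star (Z ^ d)"
proof (rule star_unique[symmetric, OF Z0])
  obtain e where e: "d = Suc e" using d by (cases d) auto
  define S where "S = fps_star (Z ^ d)"
  define A where "A = (\<Sum>j<e. Z ^ Suc j)"
  have "(Z ^ d) $ 0 = 0" using Z0 by (simp add: e)
  then have S: "S = 1 + Z ^ d * S" unfolding S_def by (rule star_unfold)
  have low: "(\<Sum>j<d. Z ^ j) = 1 + A"
    unfolding A_def e by (subst sum.lessThan_Suc_shift) simp
  have shifted: "Z * (\<Sum>j<d. Z ^ j) = A + Z ^ d"
    unfolding A_def e by (simp add: sum_distrib_left distrib_left)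
  have "1 + Z * ((\<Sum>j<d. Z ^ j) * S) = (1 + Z ^ d * S) + A * S"
    by (simp add: mult.assoc[symmetric] shifted algebra_simps)
  also have "\<dots> = (\<Sum>j<d. Z ^ j) * S" using S by (simp add: low algebra_simps)
  finally show "(\<Sum>j<d. Z ^ j) * S = 1 + Z * ((\<Sum>j<d. Z ^ j) * S)" by simp
qed

section \<open>Sums of geometric terms of a common period\<close>

definition geom_term :: "nat \<Rightarrow> 'a::comm_semiring_1 poly \<Rightarrow> 'a \<Rightarrow> 'a fps" where
  "geom_term c p q = fps_of_poly p * fps_star (fps_const q * fps_X ^ c)"

definition periodic_form :: "nat \<Rightarrow> 'a::comm_semiring_1 fps \<Rightarrow> bool" where
  "periodic_form c S \<longleftrightarrow> (\<exists>xs. S = sum_list (map (\<lambda>(p, q). geom_term c p q) xs))"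

definition normal_form :: "'a::comm_semiring_1 fps \<Rightarrow> bool" where
  "normal_form S \<longleftrightarrow> (\<exists>c>0. periodic_form c S)"

lemma geom_term_nth_0: "0 < c \<Longrightarrow> geom_term c p q $ 0 = coeff p 0"
  by (simp add: geom_term_def)

lemma periodic_form_geom_term: "periodic_form c (geom_term c p q)"
  unfolding periodic_form_def by (rule exI[of _ "[(p, q)]"]) simp

lemma periodic_form_0: "periodic_form c 0"
  unfolding periodic_form_def by (rule exI[of _ "[]"]) simp

lemma periodic_form_add:
  "periodic_form c S \<Longrightarrow> periodic_form c T \<Longrightarrow> periodic_form c (S + T)"
  unfolding periodic_form_def by (metis map_append sum_list_append)

lemma periodic_form_sum_list:
  "(\<And>x. x \<in> set xs \<Longrightarrow> periodic_form c (f x)) \<Longrightarrow> periodic_form c (sum_list (map f xs))"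
  by (induction xs) (auto intro: periodic_form_0 periodic_form_add)

text \<open>The library states this only over rings.\<close>
lemma fps_of_poly_monom_semiring: "fps_of_poly (monom a n) = fps_const a * fps_X ^ n"
  by (rule fps_ext) (simp add: coeff_monom)

text \<open>A term of period c is a term of period c d, by the splitting of the star.\<close>
lemma geom_term_refine:
  fixes q :: "'a::comm_semiring_1"
  assumes c: "0 < c" and d: "0 < d"
  shows "geom_term c p q = geom_term (c * d) (p * (\<Sum>j<d. monom (q ^ j) (c * j))) (q ^ d)"
proof -
  define Z where "Z = fps_const q * fps_X ^ c"
  have Z_power: "Z ^ j = fps_const (q ^ j) * fps_X ^ (c * j)" for j
    unfolding Z_def by (simp add: power_mult_distrib power_mult)
  have "fps_of_poly (\<Sum>j<d. monom (q ^ j) (c * j)) = (\<Sum>j<d. Z ^ j)"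
    by (simp add: fps_of_poly_sum fps_of_poly_monom_semiring Z_power)
  moreover have "fps_star Z = (\<Sum>j<d. Z ^ j) * fps_star (Z ^ d)"
    by (rule star_split_period) (use c d in \<open>simp_all add: Z_def\<close>)
  ultimately show ?thesis
    unfolding geom_term_def
    by (simp add: fps_of_poly_mult Z_power[of d] Z_def[symmetric] mult.assoc)
qed

lemma periodic_form_refine:
  assumes S: "periodic_form c S" and "0 < c" "0 < d"
  shows "periodic_form (c * d) S"
proof -
  obtain xs where "S = sum_list (map (\<lambda>(p, q). geom_term c p q) xs)"
    using S unfolding periodic_form_def by blast
  moreover have "periodic_form (c * d) (geom_term c p q)" for p q
    using geom_term_refine[OF \<open>0 < c\<close> \<open>0 < d\<close>] periodic_form_geom_term by metis
  ultimately show ?thesis by (auto intro!: periodic_form_sum_list split: prod.split)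
qed

lemma normal_form_common_period:
  assumes "normal_form S" "normal_form T"
  obtains c where "0 < c" "periodic_form c S" "periodic_form c T"
proof -
  obtain c d where "0 < c" "periodic_form c S" "0 < d" "periodic_form d T"
    using assms unfolding normal_form_def by blast
  then show ?thesis
    using that[of "c * d"] periodic_form_refine[of c S d] periodic_form_refine[of d T c]
    by (simp add: mult.commute)
qed

lemma normal_form_add: "normal_form S \<Longrightarrow> normal_form T \<Longrightarrow> normal_form (S + T)"
  by (metis normal_form_common_period normal_form_def periodic_form_add)

lemma normal_form_poly: "normal_form (fps_of_poly p)"
proof -
  have "fps_of_poly p = geom_term 1 p 0" by (simp add: geom_term_def)
  then show ?thesis unfolding normal_form_def using periodic_form_geom_term[of 1 p 0] by auto
qed

lemma normal_form_1: "normal_form 1"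
  using normal_form_poly[of 1] by simp

lemma normal_form_star_geometric: "0 < c \<Longrightarrow> normal_form (fps_star (fps_const q * fps_X ^ c))"
  unfolding normal_form_def using periodic_form_geom_term[of c 1 q] by (auto simp: geom_term_def)

section \<open>Idempotent semirings\<close>

context
  assumes idem: "\<And>u::'a::comm_semiring_1. u + u = u"
begin

lemma fps_add_idem: "(U::'a fps) + U = U"
  by (rule fps_ext) (simp add: idem)

lemma zero_sum_free: "(a::'a) + b = 0 \<Longrightarrow> a = 0"
  by (metis add.assoc add_0_right idem)

lemma sum_list_nth_0_eq_0:
  fixes us :: "'a fps list"
  assumes "sum_list us $ 0 = 0" and "u \<in> set us"
  shows "u $ 0 = 0"
  using assms
proof (induction us)
  case (Cons v us)
  have "v $ 0 + sum_list us $ 0 = 0" using Cons.prems by simp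
  then have "v $ 0 = 0" "sum_list us $ 0 = 0"
    using zero_sum_free add.commute by metis+
  then show ?case using Cons by auto
qed simp

lemma star_add:
  fixes U V :: "'a fps"
  assumes U0: "U $ 0 = 0" and V0: "V $ 0 = 0"
  shows "fps_star (U + V) = fps_star U * fps_star V"
proof (rule star_unique[symmetric])
  show "(U + V) $ 0 = 0" using U0 V0 by simp
  define A where "A = fps_star U"
  define B where "B = fps_star V"
  have A: "1 + U * A = A" using star_unfold[OF U0] unfolding A_def by simp
  have B: "1 + V * B = B" using star_unfold[OF V0] unfolding B_def by simp
  have "A * B = (1 + U * A) * (1 + V * B)" unfolding A B ..
  then have AB: "A * B = 1 + U * A + V * B + U * A * V * B" by (simp add: algebra_simps)
  have "1 + (U + V) * (A * B) = 1 + U * A * (1 + V * B) + V * B * (1 + U * A)"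
    unfolding A B by (simp add: algebra_simps)
  also have "\<dots> = 1 + U * A + V * B + (U * A * V * B + U * A * V * B)"
    by (simp add: algebra_simps)
  also have "\<dots> = A * B" by (simp add: AB fps_add_idem)
  finally show "A * B = 1 + (U + V) * (A * B)" unfolding A_def B_def by simp
qed

lemma star_sum_list:
  fixes us :: "'a fps list"
  shows "(\<And>u. u \<in> set us \<Longrightarrow> u $ 0 = 0) \<Longrightarrow>
    fps_star (sum_list us) = prod_list (map fps_star us)"
proof (induction us)
  case (Cons u us)
  have "sum_list us $ 0 = 0"
    using Cons.prems by (induction us) auto
  then show ?case using Cons star_add[of u "sum_list us"] by simp
qed simp

text \<open>The star of a series P W^* without constant term; it uses the
  idempotency of stars, W^* W^* = W^*.\<close>
lemma star_mult_star:
  fixes P W :: "'a fps"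
  assumes P0: "P $ 0 = 0" and W0: "W $ 0 = 0"
  shows "fps_star (P * fps_star W) = 1 + P * fps_star P * fps_star W"
proof (rule star_unique[symmetric])
  show "(P * fps_star W) $ 0 = 0" using P0 by simp
  define T where "T = fps_star P"
  define S where "S = fps_star W"
  have T: "1 + P * T = T" using star_unfold[OF P0] unfolding T_def by simp
  have S: "S * S = S"
    using star_add[OF W0 W0] unfolding S_def by (simp add: fps_add_idem)
  have "1 + P * S * (1 + P * T * S) = 1 + P * S + P * P * T * (S * S)"
    by (simp add: algebra_simps)
  also have "\<dots> = 1 + P * S * (1 + P * T)" by (simp add: S algebra_simps)
  also have "\<dots> = 1 + P * T * S" by (simp add: T algebra_simps)
  finally show "1 + P * T * S = 1 + P * S * (1 + P * T * S)" by simp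
qed

text \<open>Terms of a common period multiply: the stars of the two geometric
  series combine into the star of their sum.\<close>
lemma geom_term_mult:
  assumes c: "0 < c"
  shows "geom_term c p (q::'a) * geom_term c p' q' = geom_term c (p * p') (q + q')"
proof -
  have "fps_const q * fps_X ^ c + fps_const q' * fps_X ^ c = fps_const (q + q') * fps_X ^ c"
    by (metis distrib_right fps_const_add)
  then have "fps_star (fps_const (q + q') * fps_X ^ c)
      = fps_star (fps_const q * fps_X ^ c) * fps_star (fps_const q' * fps_X ^ c)"
    using star_add[of "fps_const q * fps_X ^ c" "fps_const q' * fps_X ^ c"] c by simp
  then show ?thesis unfolding geom_term_def by (simp add: fps_of_poly_mult algebra_simps)
qed

lemma periodic_form_mult:
  assumes c: "0 < c" and S: "periodic_form c (S::'a fps)" and T: "periodic_form c T"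
  shows "periodic_form c (S * T)"
proof -
  obtain xs ys where
    xs: "S = sum_list (map (\<lambda>(p, q). geom_term c p q) xs)" and
    ys: "T = sum_list (map (\<lambda>(p, q). geom_term c p q) ys)"
    using S T unfolding periodic_form_def by blast
  have "periodic_form c (geom_term c p q * T)" for p q
    unfolding ys sum_list_const_mult[symmetric]
    by (rule periodic_form_sum_list)
       (auto simp: geom_term_mult[OF c] periodic_form_geom_term)
  then show ?thesis
    unfolding xs sum_list_mult_const[symmetric]
    by (intro periodic_form_sum_list) auto
qed

lemma normal_form_mult: "normal_form (S::'a fps) \<Longrightarrow> normal_form T \<Longrightarrow> normal_form (S * T)"
  by (metis normal_form_common_period normal_form_def periodic_form_mult)

lemma normal_form_prod_list:
  "(\<And>S. S \<in> set Ss \<Longrightarrow> normal_form (S::'a fps)) \<Longrightarrow> normal_form (prod_list Ss)"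
  by (induction Ss) (auto intro: normal_form_1 normal_form_mult)

text \<open>The star of a polynomial without constant term is the product of the
  stars of its monomials, each of which is a geometric term.\<close>
lemma normal_form_star_poly:
  assumes p0: "coeff (p::'a poly) 0 = 0"
  shows "normal_form (fps_star (fps_of_poly p))"
proof -
  define monomial_term where "monomial_term m = fps_const (coeff p m) * fps_X ^ m" for m
  have "fps_of_poly p = fps_of_poly (\<Sum>m\<le>degree p. monom (coeff p m) m)"
    by (simp only: poly_as_sum_of_monoms)
  also have "\<dots> = (\<Sum>m\<le>degree p. monomial_term m)"
    by (simp add: fps_of_poly_sum fps_of_poly_monom_semiring monomial_term_def)
  also have "{..degree p} = set [0..<Suc (degree p)]" by auto
  also have "(\<Sum>m\<in>set [0..<Suc (degree p)]. monomial_term m)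
      = sum_list (map monomial_term [0..<Suc (degree p)])"
    by (rule sum_set_upt_conv_sum_list_nat)
  finally have "fps_star (fps_of_poly p)
      = prod_list (map fps_star (map monomial_term [0..<Suc (degree p)]))"
    by (simp only:) (rule star_sum_list, use p0 in \<open>auto simp: monomial_term_def\<close>)
  also have "normal_form \<dots>"
  proof (rule normal_form_prod_list)
    fix T assume "T \<in> set (map fps_star (map monomial_term [0..<Suc (degree p)]))"
    then obtain m where "T = fps_star (monomial_term m)" by auto
    then show "normal_form T"
      using p0 by (cases "m = 0")
        (auto simp: monomial_term_def normal_form_1 normal_form_star_geometric)
  qed
  finally show ?thesis .
qed

lemma normal_form_star_geom_term:
  assumes c: "0 < c" and t0: "geom_term c p (q::'a) $ 0 = 0"
  shows "normal_form (fps_star (geom_term c p q))"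
proof -
  have p0: "coeff p 0 = 0" using t0 by (simp add: geom_term_nth_0[OF c])
  have "fps_star (geom_term c p q)
      = 1 + fps_of_poly p * fps_star (fps_of_poly p) * fps_star (fps_const q * fps_X ^ c)"
    unfolding geom_term_def by (rule star_mult_star) (use p0 c in simp_all)
  also have "normal_form \<dots>"
    by (intro normal_form_add normal_form_mult normal_form_1 normal_form_poly
          normal_form_star_poly normal_form_star_geometric p0 c)
  finally show ?thesis .
qed

text \<open>Closure under star: the star of a sum of terms without constant term
  is the product of the stars of the terms.\<close>
lemma normal_form_star:
  assumes S: "normal_form (S::'a fps)" and S0: "S $ 0 = 0"
  shows "normal_form (fps_star S)"
proof -
  obtain c xs where c: "0 < c" and xs: "S = sum_list (map (\<lambda>(p, q). geom_term c p q) xs)"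
    using S unfolding normal_form_def periodic_form_def by blast
  define ts where "ts = map (\<lambda>(p, q). geom_term c p q) xs"
  have terms0: "t $ 0 = 0" if "t \<in> set ts" for t
    using sum_list_nth_0_eq_0 S0 xs that unfolding ts_def by blast
  have terms_star: "normal_form (fps_star t)" if t: "t \<in> set ts" for t
  proof -
    obtain p q where "t = geom_term c p q" using t unfolding ts_def by auto
    then show ?thesis using normal_form_star_geom_term[OF c] terms0[OF t] by simp
  qed
  have "fps_star S = prod_list (map fps_star ts)"
    unfolding xs ts_def[symmetric] using terms0 by (rule star_sum_list)
  also have "normal_form \<dots>"
    using terms_star by (auto intro!: normal_form_prod_list)
  finally show ?thesis .
qed

lemma rational_normal_form: "(S::'a fps) \<in> rational_fps \<Longrightarrow> normal_form S"
  by (induction rule: rational_fps.induct)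
     (auto intro: normal_form_poly normal_form_add normal_form_mult normal_form_star)

end

lemma sum_list_as_indexed_sum:
  "sum_list (map f xs) = (\<Sum>i\<in>{1..length xs}. f (xs ! (i - 1)))"
  by (simp add: sum_list_sum_nth sum.atLeast1_atMost_eq atLeast0LessThan)

theorem lemma1:
  fixes S :: "'a::comm_semiring_1 fps"
  assumes idem: "\<And>u::'a. u + u = u"
    and rat: "S \<in> rational_fps"
  shows "\<exists>(r::nat) (P :: nat \<Rightarrow> 'a poly) (q :: nat \<Rightarrow> 'a) (c::nat). c > 0 \<and>
           S = (\<Sum>i\<in>{1..r}. fps_of_poly (P i) * fps_star (fps_const (q i) * fps_X ^ c))"
proof -
  obtain c xs where c: "0 < c" and xs: "S = sum_list (map (\<lambda>(p, q). geom_term c p q) xs)"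
    using rational_normal_form[OF idem rat] unfolding normal_form_def periodic_form_def by blast
  define P where "P i = fst (xs ! (i - 1))" for i
  define q where "q i = snd (xs ! (i - 1))" for i
  have "S = (\<Sum>i\<in>{1..length xs}. fps_of_poly (P i) * fps_star (fps_const (q i) * fps_X ^ c))"
    unfolding xs sum_list_as_indexed_sum by (simp add: P_def q_def geom_term_def case_prod_beta)
  then show ?thesis using c by blast
qed

end
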